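(* If $P$ is a finite unit OC interval order, then $\dim(P) \le 3$.
   Context: Posets are finite and reflexive. A finite poset $P$ is a unit OC interval order if each element $x$ of $P$ can be assigned a real interval $I_x$ of length $1$ which is either open, $(a,a+1)$, or closed, $[a,a+1]$ (both types may occur in the same representation), such that for distinct $x,y$, $x<y$ in $P$ if and only if $I_x$ and $I_y$ are disjoint and every point of $I_x$ is less than every point of $I_y$. A realizer of $P$ is a set $\mathcal{R}$ of linear extensions of $P$ such that $x<y$ in $P$ if and only if $x<y$ in every $L \in \mathcal{R}$; the dimension $\dim(P)$ is the minimum cardinality of a realizer. *)

theory Defs
  imports Complex_Main
begin

definition poset_on :: "'a set \<Rightarrow> ('a \<Rightarrow> 'a \<Rightarrow> bool) \<Rightarrow> bool" where
  "poset_on A le \<longleftrightarrow>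
     (\<forall>x\<in>A. le x x) \<and>
     (\<forall>x\<in>A. \<forall>y\<in>A. le x y \<and> le y x \<longrightarrow> x = y) \<and>
     (\<forall>x\<in>A. \<forall>y\<in>A. \<forall>z\<in>A. le x y \<and> le y z \<longrightarrow> le x z)"

definition strict :: "('a \<Rightarrow> 'a \<Rightarrow> bool) \<Rightarrow> 'a \<Rightarrow> 'a \<Rightarrow> bool" where
  "strict le x y \<longleftrightarrow> le x y \<and> x \<noteq> y"

definition unit_oc_interval :: "bool \<Rightarrow> real \<Rightarrow> real set" where
  "unit_oc_interval c a = (if c then {a..a+1} else {a<..<a+1})"

definition unit_OC_interval_order :: "'a set \<Rightarrow> ('a \<Rightarrow> 'a \<Rightarrow> bool) \<Rightarrow> bool" where
  "unit_OC_interval_order A le \<longleftrightarrow>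
     (\<exists>(a :: 'a \<Rightarrow> real) (c :: 'a \<Rightarrow> bool).
        \<forall>x\<in>A. \<forall>y\<in>A. x \<noteq> y \<longrightarrow>
          (strict le x y \<longleftrightarrow>
             unit_oc_interval (c x) (a x) \<inter> unit_oc_interval (c y) (a y) = {} \<and>
             (\<forall>p\<in>unit_oc_interval (c x) (a x). \<forall>q\<in>unit_oc_interval (c y) (a y). p < q)))"

definition linear_extension :: "'a set \<Rightarrow> ('a \<Rightarrow> 'a \<Rightarrow> bool) \<Rightarrow> ('a \<Rightarrow> 'a \<Rightarrow> bool) \<Rightarrow> bool" where
  "linear_extension A le L \<longleftrightarrow>
     poset_on A L \<and> (\<forall>x\<in>A. \<forall>y\<in>A. L x y \<or> L y x) \<and>
     (\<forall>x\<in>A. \<forall>y\<in>A. le x y \<longrightarrow> L x y)"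

definition realizer :: "'a set \<Rightarrow> ('a \<Rightarrow> 'a \<Rightarrow> bool) \<Rightarrow> ('a \<Rightarrow> 'a \<Rightarrow> bool) set \<Rightarrow> bool" where
  "realizer A le R \<longleftrightarrow>
     (\<forall>L\<in>R. linear_extension A le L) \<and>
     (\<forall>x\<in>A. \<forall>y\<in>A. strict le x y \<longleftrightarrow> (\<forall>L\<in>R. strict L x y))"

definition order_dim :: "'a set \<Rightarrow> ('a \<Rightarrow> 'a \<Rightarrow> bool) \<Rightarrow> nat" where
  "order_dim A le = (LEAST n. \<exists>R. realizer A le R \<and> finite R \<and> card R = n)"

end

theory Submission
  imports Defs "HOL-Library.Product_Lexorder"
begin

text \<open>Describe the interval of \<open>x\<close> by its left endpoint \<open>a x\<close> and whether it is closed;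
  then \<open>x < y\<close> iff \<open>a x + 1 < a y\<close>, or \<open>a x + 1 = a y\<close> and not both intervals are closed.
  Three lexicographic keys give the realizer. The first sorts by \<open>\<lfloor>a\<rfloor>\<close> ascending and then by
  the fractional part descending; the other two cut the line into blocks \<open>[2k + s, 2k + s + 2)\<close>,
  \<open>s \<in> {0, 1}\<close>, and sort by block and then by fractional part ascending. Incomparable elements
  have left endpoints less than 1 apart (or exactly 1 apart with closed intervals). In the same
  unit cell the first key and a block key disagree; in adjacent cells the first key puts the
  lower element first, while the block key containing both cells puts the upper one first.
  An injective index, used in opposite directions by the first key and the block keys, breaks
  the remaining ties.\<close>

lemma linear_extension_of_key:
  fixes K :: "'a \<Rightarrow> 'k::linorder"
  assumes "inj_on K A"
    and "\<And>x y. x \<in> A \<Longrightarrow> y \<in> A \<Longrightarrow> strict le x y \<Longrightarrow> K x < K y"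
  shows "linear_extension A le (\<lambda>x y. K x \<le> K y)"
  unfolding linear_extension_def poset_on_def
proof (intro conjI ballI impI)
  fix x y assume "x \<in> A" "y \<in> A" "K x \<le> K y \<and> K y \<le> K x"
  then show "x = y" using assms(1) by (auto dest: inj_onD)
next
  fix x y assume "x \<in> A" "y \<in> A" "le x y"
  then show "K x \<le> K y"
    using assms(2)[of x y] by (cases "x = y") (auto simp: strict_def)
qed auto

lemma realizer_if_incomparables_reversed:
  assumes "R \<noteq> {}" and "\<forall>L\<in>R. linear_extension A le L"
    and "\<And>x y. x \<in> A \<Longrightarrow> y \<in> A \<Longrightarrow> x \<noteq> y \<Longrightarrow> \<not> strict le x y \<Longrightarrow> \<exists>L\<in>R. \<not> L x y"
  shows "realizer A le R"
  unfolding realizer_def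
proof (intro conjI ballI iffI)
  fix L assume "L \<in> R"
  with assms(2) show "linear_extension A le L" by blast
next
  fix x y L assume "x \<in> A" "y \<in> A" "strict le x y" "L \<in> R"
  with assms(2) show "strict L x y"
    by (auto simp: strict_def linear_extension_def)
next
  fix x y assume "x \<in> A" "y \<in> A" and all: "\<forall>L\<in>R. strict L x y"
  moreover from all assms(1) have "x \<noteq> y" by (auto simp: strict_def)
  ultimately show "strict le x y"
    using assms(3) by (auto simp: strict_def)
qed

lemma order_dim_le_card_realizer:
  assumes "realizer A le R" and "finite R"
  shows "order_dim A le \<le> card R"
  unfolding order_dim_def by (rule Least_le) (use assms in blast)

definition oc_precedes :: "real \<Rightarrow> bool \<Rightarrow> real \<Rightarrow> bool \<Rightarrow> bool" where
  "oc_precedes a c b d \<longleftrightarrow> a + 1 < b \<or> (a + 1 = b \<and> \<not> (c \<and> d))"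

lemma unit_oc_interval_precedes_iff:
  "(unit_oc_interval c a \<inter> unit_oc_interval d b = {} \<and>
    (\<forall>p\<in>unit_oc_interval c a. \<forall>q\<in>unit_oc_interval d b. p < q))
   \<longleftrightarrow> oc_precedes a c b d"
  (is "?before \<longleftrightarrow> _")
proof
  have open_part: "t \<in> unit_oc_interval e s" if "s < t" "t < s + 1" for e s t
    using that by (auto simp: unit_oc_interval_def)
  assume ?before
  then have all_less: "\<And>p q. p \<in> unit_oc_interval c a \<Longrightarrow> q \<in> unit_oc_interval d b \<Longrightarrow> p < q"
    by blast
  have "a < b"
    using all_less[OF open_part[of a] open_part[of b], of "a + 1/2" "b + 1/2"] by simp
  moreover have "\<not> b < a + 1"
    using all_less[OF open_part[of a] open_part[of b], of "(a + b + 1) / 2" "(a + b + 1) / 2"]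
      \<open>a < b\<close> by auto
  moreover have "\<not> (b = a + 1 \<and> c \<and> d)"
    using all_less[of b b] by (auto simp: unit_oc_interval_def)
  ultimately show "oc_precedes a c b d"
    by (auto simp: oc_precedes_def)
next
  assume "oc_precedes a c b d"
  then have "p < q" if "p \<in> unit_oc_interval c a" "q \<in> unit_oc_interval d b" for p q
    using that by (auto simp: oc_precedes_def unit_oc_interval_def split: if_splits)
  then show ?before by fastforce
qed

definition floor_key :: "real \<Rightarrow> nat \<Rightarrow> int \<times> real \<times> int" where
  "floor_key a i = (\<lfloor>a\<rfloor>, - frac a, - int i)"

text \<open>Within a block, equal fractional parts come from equal endpoints or endpoints at distance 1.
  The lower of two endpoints at distance 1 goes first unless both intervals are closed; for
  equal endpoints open goes before closed in one block key and after it in the other, because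
  the two block keys (shift 0 and 1) disagree about which half of the block is the lower one.\<close>

definition block_rank :: "bool \<Rightarrow> bool \<Rightarrow> nat" where
  "block_rank lower c = (if lower then (if c then 2 else 0) else (if c then 1 else 3))"

definition block_key :: "int \<Rightarrow> real \<Rightarrow> bool \<Rightarrow> nat \<Rightarrow> int \<times> real \<times> nat \<times> nat" where
  "block_key s a c i = ((\<lfloor>a\<rfloor> + s) div 2, frac a, block_rank (even (\<lfloor>a\<rfloor> + s)) c, i)"

lemma floor_key_mono:
  assumes "oc_precedes a c b d"
  shows "floor_key a i < floor_key b j"
proof -
  have "a + 1 \<le> b" using assms by (auto simp: oc_precedes_def)
  then have "\<lfloor>a\<rfloor> < \<lfloor>b\<rfloor>" by linarith
  then show ?thesis by (simp add: floor_key_def)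
qed

lemma block_key_mono:
  assumes "oc_precedes a c b d"
  shows "block_key s a c i < block_key s b d j"
proof -
  have "a + 1 \<le> b" using assms by (auto simp: oc_precedes_def)
  then have "\<lfloor>a\<rfloor> < \<lfloor>b\<rfloor>" by linarith
  show ?thesis
  proof (cases "(\<lfloor>a\<rfloor> + s) div 2 = (\<lfloor>b\<rfloor> + s) div 2")
    case False
    with \<open>\<lfloor>a\<rfloor> < \<lfloor>b\<rfloor>\<close> have "(\<lfloor>a\<rfloor> + s) div 2 < (\<lfloor>b\<rfloor> + s) div 2"
      by (smt (verit) zdiv_mono1)
    then show ?thesis by (simp add: block_key_def)
  next
    case same_block: True
    with \<open>\<lfloor>a\<rfloor> < \<lfloor>b\<rfloor>\<close> have floor_b: "\<lfloor>b\<rfloor> = \<lfloor>a\<rfloor> + 1" and lower: "even (\<lfloor>a\<rfloor> + s)"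
      by presburger+
    have frac_diff: "frac b - frac a = b - a - 1"
      using floor_b by (simp add: frac_def)
    show ?thesis
    proof (cases "frac a < frac b")
      case True
      with same_block show ?thesis by (simp add: block_key_def)
    next
      case False
      with frac_diff \<open>a + 1 \<le> b\<close> have "b = a + 1" "frac a = frac b" by auto
      with assms have "\<not> (c \<and> d)" by (simp add: oc_precedes_def)
      with lower floor_b have "block_rank (even (\<lfloor>a\<rfloor> + s)) c < block_rank (even (\<lfloor>b\<rfloor> + s)) d"
        by (auto simp: block_rank_def)
      with same_block \<open>frac a = frac b\<close> show ?thesis by (simp add: block_key_def)
    qed
  qed
qed

definition key_before :: "real \<Rightarrow> bool \<Rightarrow> nat \<Rightarrow> real \<Rightarrow> bool \<Rightarrow> nat \<Rightarrow> bool" where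
  "key_before a c i b d j \<longleftrightarrow>
     floor_key a i < floor_key b j \<or> block_key 0 a c i < block_key 0 b d j \<or>
     block_key 1 a c i < block_key 1 b d j"

lemma key_before_if_same_floor:
  assumes "\<lfloor>a\<rfloor> = \<lfloor>b\<rfloor>" and "i \<noteq> j"
  shows "key_before a c i b d j"
proof -
  have "frac a < frac b \<longleftrightarrow> a < b" using assms(1) by (simp add: frac_def)
  with assms show ?thesis
    by (cases "a = b"; cases c; cases d; cases "even \<lfloor>a\<rfloor>")
      (auto simp: key_before_def floor_key_def block_key_def block_rank_def)
qed

lemma key_before_if_next_floor:
  assumes "\<lfloor>b\<rfloor> = \<lfloor>a\<rfloor> + 1" and "\<not> oc_precedes a c b d"
  shows "key_before b d j a c i"
proof -
  define s :: int where "s = (if even \<lfloor>a\<rfloor> then 0 else 1)"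
  have "s \<in> {0, 1}" by (simp add: s_def)
  have same_block: "(\<lfloor>b\<rfloor> + s) div 2 = (\<lfloor>a\<rfloor> + s) div 2" and lower: "even (\<lfloor>a\<rfloor> + s)"
    using assms(1) by (auto simp: s_def)
  have frac_diff: "frac b - frac a = b - a - 1"
    using assms(1) by (simp add: frac_def)
  have "block_key s b d j < block_key s a c i"
  proof (cases "frac b < frac a")
    case True
    with same_block show ?thesis by (simp add: block_key_def)
  next
    case False
    with frac_diff assms(2) have "frac b = frac a" "c" "d"
      by (auto simp: oc_precedes_def)
    with same_block lower assms(1) show ?thesis
      by (simp add: block_key_def block_rank_def)
  qed
  with \<open>s \<in> {0, 1}\<close> show ?thesis by (auto simp: key_before_def)
qed

lemma key_before_unless_precedes:
  assumes "\<not> oc_precedes a c b d" and "i \<noteq> j"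
  shows "key_before b d j a c i"
proof -
  have "b \<le> a + 1" using assms(1) by (auto simp: oc_precedes_def)
  then have "\<lfloor>b\<rfloor> \<le> \<lfloor>a\<rfloor> + 1" by linarith
  then consider "\<lfloor>b\<rfloor> < \<lfloor>a\<rfloor>" | "\<lfloor>b\<rfloor> = \<lfloor>a\<rfloor>" | "\<lfloor>b\<rfloor> = \<lfloor>a\<rfloor> + 1" by linarith
  then show ?thesis
  proof cases
    case 1
    then show ?thesis by (simp add: key_before_def floor_key_def)
  next
    case 2
    with assms(2) show ?thesis by (intro key_before_if_same_floor) auto
  next
    case 3
    then show ?thesis using assms(1) by (rule key_before_if_next_floor)
  qed
qed

lemma realizer_of_unit_oc_representation:
  assumes "finite A"
    and rep: "\<And>x y. x \<in> A \<Longrightarrow> y \<in> A \<Longrightarrow> x \<noteq> y \<Longrightarrow>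
      strict le x y \<longleftrightarrow> oc_precedes (a x) (c x) (a y) (c y)"
  shows "\<exists>R. realizer A le R \<and> finite R \<and> card R \<le> 3"
proof -
  obtain idx :: "'a \<Rightarrow> nat" where "inj_on idx A"
    using finite_imp_inj_to_nat_seg[OF assms(1)] by blast
  define La where "La x y \<longleftrightarrow> floor_key (a x) (idx x) \<le> floor_key (a y) (idx y)" for x y
  define Lb where "Lb x y \<longleftrightarrow> block_key 0 (a x) (c x) (idx x) \<le> block_key 0 (a y) (c y) (idx y)" for x y
  define Lc where "Lc x y \<longleftrightarrow> block_key 1 (a x) (c x) (idx x) \<le> block_key 1 (a y) (c y) (idx y)" for x y
  have linear_extension_of_interval_key: "linear_extension A le (\<lambda>x y. K x \<le> K y)"
    if "inj_on K A" and "\<And>x y. oc_precedes (a x) (c x) (a y) (c y) \<Longrightarrow> K x < K y"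
    for K :: "'a \<Rightarrow> 'k::linorder"
    using that rep by (intro linear_extension_of_key) (auto simp: strict_def)
  have "linear_extension A le La" "linear_extension A le Lb" "linear_extension A le Lc"
    unfolding La_def Lb_def Lc_def using \<open>inj_on idx A\<close>
    by (intro linear_extension_of_interval_key floor_key_mono block_key_mono;
        auto simp: inj_on_def floor_key_def block_key_def)+
  moreover have "\<exists>L\<in>{La, Lb, Lc}. \<not> L x y"
    if "x \<in> A" "y \<in> A" "x \<noteq> y" "\<not> strict le x y" for x y
  proof -
    have "\<not> oc_precedes (a x) (c x) (a y) (c y)" using rep that by blast
    moreover have "idx x \<noteq> idx y" using \<open>inj_on idx A\<close> that by (auto dest: inj_onD)
    ultimately have "key_before (a y) (c y) (idx y) (a x) (c x) (idx x)"
      by (rule key_before_unless_precedes)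
    then show ?thesis by (auto simp: key_before_def La_def Lb_def Lc_def not_le)
  qed
  ultimately have "realizer A le {La, Lb, Lc}"
    by (intro realizer_if_incomparables_reversed) auto
  moreover have "card {La, Lb, Lc} \<le> 3"
    by (simp add: card_insert_le_m1)
  ultimately show ?thesis by blast
qed

theorem theorem2:
  fixes A :: "'a set" and le :: "'a \<Rightarrow> 'a \<Rightarrow> bool"
  assumes "finite A" and "poset_on A le" and "unit_OC_interval_order A le"
  shows "order_dim A le \<le> 3"
proof -
  obtain a :: "'a \<Rightarrow> real" and c :: "'a \<Rightarrow> bool" where
    "\<And>x y. x \<in> A \<Longrightarrow> y \<in> A \<Longrightarrow> x \<noteq> y \<Longrightarrow>
       strict le x y \<longleftrightarrow> oc_precedes (a x) (c x) (a y) (c y)"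
    using assms(3) unfolding unit_OC_interval_order_def unit_oc_interval_precedes_iff by blast
  then obtain R where "realizer A le R" "finite R" "card R \<le> 3"
    using realizer_of_unit_oc_representation[OF assms(1)] by blast
  then show ?thesis
    using order_dim_le_card_realizer order_trans by blast
qed

end
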